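(* Let $B$ be a commutative ring, let $x,y\in B$ with $Bx+By=B$, let $\alpha\subset B$ be an ideal, and let $\nu_1,\ldots,\nu_p\subset B$ be prime ideals. Suppose that for every $a\in\alpha$ there exists $c_0$ (depending on $a$) such that $x+ay^c\in\bigcup_{i=1}^p\nu_i$ for all $c\ge c_0$. Then $Bx+\alpha\subset\nu_i$ for some $i$. *)

theory Defs
  imports "HOL-Algebra.Algebra"
begin

end

(* Induct on the finite set of primes. Comparable primes can be discarded, and so can any
   prime nu j whose removal keeps the hypothesis. Otherwise some a in alpha has x + a y^c outside
   the other primes, hence inside nu j, for infinitely many c. If alpha were not contained in nu j,
   prime avoidance would give t in alpha lying in every other prime but not in nu j; then
   x + (a + t) y^c also lies in nu j for such large c, so t y^c and hence y lie in nu j, and then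
   so does x, contradicting Bx + By = B. Thus alpha is contained in nu j, and x lies in nu j. *)

theory Submission
  imports Defs
begin

lemma (in ideal) add_right_mem_iff:
  assumes "u \<in> carrier R" "v \<in> I"
  shows "u \<oplus> v \<in> I \<longleftrightarrow> u \<in> I"
proof
  assume "u \<oplus> v \<in> I"
  then have "(u \<oplus> v) \<oplus> \<ominus> v \<in> I"
    using assms(2) by blast
  moreover have "(u \<oplus> v) \<oplus> \<ominus> v = u"
    using assms a_subset by (simp add: a_assoc r_neg subsetD)
  ultimately show "u \<in> I" by simp
qed (simp add: assms)

lemma (in ideal) add_left_mem_iff:
  assumes "u \<in> carrier R" "v \<in> I"
  shows "v \<oplus> u \<in> I \<longleftrightarrow> u \<in> I"
  using add_right_mem_iff[OF assms] assms(1) Icarr[OF assms(2)] by (simp add: a_comm)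

lemma (in ideal) pow_mem:
  assumes "y \<in> I" "0 < n"
  shows "y [^] (n::nat) \<in> I"
proof -
  obtain m where "n = Suc m" using assms(2) gr0_implies_Suc by blast
  then show ?thesis
    using assms(1) a_subset I_l_closed by (simp add: subsetD)
qed

lemma (in ideal) comaximal_not_both_mem:
  assumes "carrier R \<noteq> I"
    and "b \<in> carrier R" "b' \<in> carrier R" "b \<otimes> x \<oplus> b' \<otimes> y = \<one>"
  shows "\<not> (x \<in> I \<and> y \<in> I)"
proof
  assume "x \<in> I \<and> y \<in> I"
  then have "b \<otimes> x \<oplus> b' \<otimes> y \<in> I"
    using assms(2,3) I_l_closed by simp
  then have "\<one> \<in> I" using assms(4) by simp
  then show False using assms(1) one_imp_carrier by simp
qed

lemma (in primeideal) pow_mem_imp_mem: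
  assumes "y \<in> carrier R" "y [^] (n::nat) \<in> I"
  shows "y \<in> I"
  using assms(2)
proof (induction n)
  case 0
  then show ?case using I_notcarr one_imp_carrier by simp
next
  case (Suc n)
  then have "y [^] n \<otimes> y \<in> I" by simp
  then show ?case using I_prime assms(1) Suc.IH by blast
qed

text \<open>Prime avoidance for products: a prime containing none of finitely many ideals does not
  contain their product.\<close>

lemma (in primeideal) exists_mem_ideals_notin:
  assumes "finite S" "ideal J R" "\<not> J \<subseteq> I"
    and "\<forall>i\<in>S. ideal (\<nu> i) R \<and> \<not> \<nu> i \<subseteq> I"
  shows "\<exists>t\<in>J. t \<notin> I \<and> (\<forall>i\<in>S. t \<in> \<nu> i)"
  using assms(1,4)
proof (induction S rule: finite_induct)
  case empty
  then show ?case using assms(3) by blast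
next
  case (insert k S)
  then obtain t where t: "t \<in> J" "t \<notin> I" "\<forall>i\<in>S. t \<in> \<nu> i" by auto
  obtain s where s: "s \<in> \<nu> k" "s \<notin> I" using insert.prems by auto
  have "ideal (\<nu> k) R" using insert.prems by simp
  from ideal.Icarr[OF this s(1)] have s_carrier: "s \<in> carrier R" .
  have t_carrier: "t \<in> carrier R"
    using ideal.Icarr[OF assms(2) t(1)] .
  have "t \<otimes> s \<in> J" using ideal.I_r_closed[OF assms(2) t(1) s_carrier] .
  moreover have "t \<otimes> s \<notin> I" using I_prime t_carrier s_carrier t(2) s(2) by blast
  moreover have "\<forall>i\<in>insert k S. t \<otimes> s \<in> \<nu> i"
    using insert.prems s(1) t(3) t_carrier s_carrier
    by (auto intro: ideal.I_l_closed ideal.I_r_closed)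
  ultimately show ?case by blast
qed

lemma (in cring) escaping_prime_contains_ideal:
  assumes "finite S" "j \<in> S"
    and primes: "\<forall>i\<in>S. primeideal (\<nu> i) R"
    and incomparable: "\<forall>i\<in>S - {j}. \<not> \<nu> i \<subseteq> \<nu> j"
    and not_both: "\<not> (x \<in> \<nu> j \<and> y \<in> \<nu> j)"
    and x: "x \<in> carrier R" and y: "y \<in> carrier R" and \<alpha>: "ideal \<alpha> R"
    and cover: "\<forall>a\<in>\<alpha>. \<forall>\<^sub>F c in sequentially. x \<oplus> a \<otimes> y [^] c \<in> (\<Union>i\<in>S. \<nu> i)"
    and a: "a \<in> \<alpha>"
    and escape: "\<exists>\<^sub>F c in sequentially. x \<oplus> a \<otimes> y [^] c \<notin> (\<Union>i\<in>S - {j}. \<nu> i)"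
  shows "\<alpha> \<subseteq> \<nu> j"
proof (rule ccontr)
  assume "\<not> \<alpha> \<subseteq> \<nu> j"
  interpret P: primeideal "\<nu> j" R using primes assms(2) by simp
  interpret A: ideal \<alpha> R by (rule \<alpha>)
  have "\<forall>i\<in>S - {j}. ideal (\<nu> i) R \<and> \<not> \<nu> i \<subseteq> \<nu> j"
    using primes incomparable primeideal.axioms(1) by blast
  then obtain t where t: "t \<in> \<alpha>" "t \<notin> \<nu> j" "\<forall>i\<in>S - {j}. t \<in> \<nu> i"
    using P.exists_mem_ideals_notin[OF _ \<alpha> \<open>\<not> \<alpha> \<subseteq> \<nu> j\<close>] assms(1) by blast
  have a_carrier: "a \<in> carrier R" and t_carrier: "t \<in> carrier R"
    using A.Icarr a t(1) by auto
  have "a \<oplus> t \<in> \<alpha>" using a t(1) by simp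
  then have "\<forall>\<^sub>F c in sequentially. 0 < c \<and> x \<oplus> (a \<oplus> t) \<otimes> y [^] c \<in> (\<Union>i\<in>S. \<nu> i)
      \<and> x \<oplus> a \<otimes> y [^] c \<in> (\<Union>i\<in>S. \<nu> i)"
    using eventually_gt_at_top[of 0] bspec[OF cover] a by (intro eventually_conj; blast)
  from frequently_ex[OF frequently_eventually_frequently[OF escape this]]
  obtain c :: nat where c: "0 < c" "x \<oplus> (a \<oplus> t) \<otimes> y [^] c \<in> (\<Union>i\<in>S. \<nu> i)"
    "x \<oplus> a \<otimes> y [^] c \<in> (\<Union>i\<in>S. \<nu> i)" "x \<oplus> a \<otimes> y [^] c \<notin> (\<Union>i\<in>S - {j}. \<nu> i)"
    by blast
  define u where "u = x \<oplus> a \<otimes> y [^] c"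
  have u_carrier: "u \<in> carrier R" and ty_carrier: "t \<otimes> y [^] c \<in> carrier R"
    unfolding u_def using x y a_carrier t_carrier by auto
  have u_j: "u \<in> \<nu> j" using c(3,4) unfolding u_def by blast
  have shifted: "x \<oplus> (a \<oplus> t) \<otimes> y [^] c = u \<oplus> t \<otimes> y [^] c"
    unfolding u_def using x y a_carrier t_carrier by (simp add: l_distr a_assoc)
  \<comment> \<open>the other primes contain \<open>t\<close>, so they cannot contain the shifted element but miss \<open>u\<close>\<close>
  have "u \<oplus> t \<otimes> y [^] c \<in> \<nu> j"
  proof -
    obtain k where k: "k \<in> S" "u \<oplus> t \<otimes> y [^] c \<in> \<nu> k" using c(2) shifted by auto
    show ?thesis
    proof (cases "k = j")
      case False
      then have k_ideal: "ideal (\<nu> k) R" and "t \<in> \<nu> k"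
        using k(1) primes t(3) primeideal.axioms(1) by auto
      then have "t \<otimes> y [^] c \<in> \<nu> k" using ideal.I_r_closed[OF k_ideal] y by simp
      then have "u \<in> \<nu> k" using k(2) ideal.add_right_mem_iff[OF k_ideal u_carrier] by simp
      then show ?thesis using False k(1) c(4) unfolding u_def by blast
    qed (use k in simp)
  qed
  then have "t \<otimes> y [^] c \<in> \<nu> j" using P.add_left_mem_iff[OF ty_carrier u_j] by simp
  then have "y [^] c \<in> \<nu> j" using P.I_prime[OF t_carrier nat_pow_closed[OF y]] t(2) by blast
  then have y_j: "y \<in> \<nu> j" by (rule P.pow_mem_imp_mem[OF y])
  then have "a \<otimes> y [^] c \<in> \<nu> j" using P.I_l_closed[OF P.pow_mem[OF _ c(1)] a_carrier] by simp
  then have "x \<in> \<nu> j" using u_j P.add_right_mem_iff[OF x] unfolding u_def by simp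
  then show False using y_j not_both by blast
qed

lemma (in cring) eventually_in_prime_union_imp_contained:
  assumes "finite S"
    and primes: "\<forall>i\<in>S. primeideal (\<nu> i) R"
    and not_both: "\<forall>i\<in>S. \<not> (x \<in> \<nu> i \<and> y \<in> \<nu> i)"
    and x: "x \<in> carrier R" and y: "y \<in> carrier R" and \<alpha>: "ideal \<alpha> R"
    and cover: "\<forall>a\<in>\<alpha>. \<forall>\<^sub>F c in sequentially. x \<oplus> a \<otimes> y [^] c \<in> (\<Union>i\<in>S. \<nu> i)"
  shows "\<exists>i\<in>S. x \<in> \<nu> i \<and> \<alpha> \<subseteq> \<nu> i"
  using assms(1) primes not_both cover
proof (induction S rule: finite_psubset_induct)
  case (psubset S)
  have IH: "\<exists>i\<in>T. x \<in> \<nu> i \<and> \<alpha> \<subseteq> \<nu> i"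
    if "T \<subset> S" "\<forall>a\<in>\<alpha>. \<forall>\<^sub>F c in sequentially. x \<oplus> a \<otimes> y [^] c \<in> (\<Union>i\<in>T. \<nu> i)" for T
    using psubset.IH[OF that(1) _ _ that(2)] psubset.prems(1,2) that(1) by blast
  show ?case
  proof (cases "\<exists>i\<in>S. \<exists>j\<in>S. i \<noteq> j \<and> \<nu> i \<subseteq> \<nu> j")
    case True
    then obtain i j where ij: "i \<in> S" "j \<in> S" "i \<noteq> j" "\<nu> i \<subseteq> \<nu> j" by blast
    then have "(\<Union>k\<in>S - {i}. \<nu> k) = (\<Union>k\<in>S. \<nu> k)" by blast
    then show ?thesis using IH[of "S - {i}"] psubset.prems(3) ij(1) by auto
  next
    case False
    have "S \<noteq> {}"
    proof
      assume "S = {}"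
      then show False
        using psubset.prems(3) ideal.axioms(1)[OF \<alpha>] additive_subgroup.zero_closed by fastforce
    qed
    then obtain j where j: "j \<in> S" by blast
    show ?thesis
    proof (cases "\<forall>a\<in>\<alpha>. \<forall>\<^sub>F c in sequentially. x \<oplus> a \<otimes> y [^] c \<in> (\<Union>i\<in>S - {j}. \<nu> i)")
      case True
      then show ?thesis using IH[of "S - {j}"] j by blast
    next
      case escaping: False
      then obtain a where a: "a \<in> \<alpha>"
        and escape: "\<exists>\<^sub>F c in sequentially. x \<oplus> a \<otimes> y [^] c \<notin> (\<Union>i\<in>S - {j}. \<nu> i)"
        by (auto simp: not_eventually)
      interpret P: primeideal "\<nu> j" R using psubset.prems(1) j by simp
      have \<alpha>_j: "\<alpha> \<subseteq> \<nu> j"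
        using escaping_prime_contains_ideal[OF psubset.hyps j psubset.prems(1) _ _ x y \<alpha>
            psubset.prems(3) a escape] False psubset.prems(2) j by blast
      from frequently_ex[OF frequently_eventually_frequently[OF escape bspec[OF psubset.prems(3) a]]]
      obtain c :: nat where "x \<oplus> a \<otimes> y [^] c \<in> \<nu> j" by blast
      moreover have "a \<otimes> y [^] c \<in> \<nu> j" using P.I_r_closed \<alpha>_j a y by auto
      ultimately have "x \<in> \<nu> j" using P.add_right_mem_iff[OF x] by simp
      then show ?thesis using \<alpha>_j j by blast
    qed
  qed
qed

theorem lemma7p1:
  fixes B (structure)
    and x y :: 'a
    and \<alpha> :: "'a set"
    and \<nu> :: "nat \<Rightarrow> 'a set"
    and p :: nat
  assumes "cring B"
    and "x \<in> carrier B" and "y \<in> carrier B"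
    and "{b \<otimes> x \<oplus> b' \<otimes> y | b b'. b \<in> carrier B \<and> b' \<in> carrier B} = carrier B"
    and "ideal \<alpha> B"
    and "\<forall>i\<in>{1..p}. primeideal (\<nu> i) B"
    and "\<forall>a\<in>\<alpha>. \<exists>c0::nat. \<forall>c\<ge>c0. x \<oplus> a \<otimes> (y [^] c) \<in> (\<Union>i\<in>{1..p}. \<nu> i)"
  shows "\<exists>i\<in>{1..p}. {b \<otimes> x \<oplus> a | b a. b \<in> carrier B \<and> a \<in> \<alpha>} \<subseteq> \<nu> i"
proof -
  interpret cring B by fact
  have "\<one> \<in> {b \<otimes> x \<oplus> b' \<otimes> y | b b'. b \<in> carrier B \<and> b' \<in> carrier B}"
    using assms(4) by simp
  then obtain b b' where "\<one> = b \<otimes> x \<oplus> b' \<otimes> y" "b \<in> carrier B" "b' \<in> carrier B"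
    unfolding mem_Collect_eq by (elim exE conjE)
  then have comaximal: "b \<in> carrier B" "b' \<in> carrier B" "b \<otimes> x \<oplus> b' \<otimes> y = \<one>"
    by simp_all
  have "\<forall>i\<in>{1..p}. \<not> (x \<in> \<nu> i \<and> y \<in> \<nu> i)"
  proof
    fix i assume "i \<in> {1..p}"
    then interpret primeideal "\<nu> i" B using assms(6) by simp
    show "\<not> (x \<in> \<nu> i \<and> y \<in> \<nu> i)" using comaximal_not_both_mem[OF I_notcarr comaximal] .
  qed
  moreover have "\<forall>a\<in>\<alpha>. \<forall>\<^sub>F c in sequentially. x \<oplus> a \<otimes> y [^] c \<in> (\<Union>i\<in>{1..p}. \<nu> i)"
    unfolding eventually_sequentially using assms(7) .
  ultimately obtain i where i: "i \<in> {1..p}" "x \<in> \<nu> i" "\<alpha> \<subseteq> \<nu> i"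
    using eventually_in_prime_union_imp_contained[OF finite_atLeastAtMost assms(6) _ assms(2,3,5)]
    by blast
  interpret primeideal "\<nu> i" B using assms(6) i(1) by simp
  have "{b \<otimes> x \<oplus> a | b a. b \<in> carrier B \<and> a \<in> \<alpha>} \<subseteq> \<nu> i"
    using i(2,3) I_l_closed by auto
  then show ?thesis using i(1) by blast
qed

end
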